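(* Fix a real number $\theta>0$ with $\theta\neq 1$ and an integer $N\ge 1$. Choose $\pi\in\mathfrak{S}_N$ at random with probability \[ f(\pi)=\frac{\theta^{\pi^{-1}(N)-1}}{\sum_{\sigma\in\mathfrak{S}_N}\theta^{\sigma^{-1}(N)-1}}. \] Then the probability that the $r$-positional strategy wins (i.e. that $\pi$ is $r$-winnable) is \[ P_r(N,\theta)=\frac{r(1-\theta)\sum_{i=r}^{N-1}\frac{\theta^i}{i}}{1-\theta^N} \] for $1\le r\le N-1$, and is $\frac{1-\theta}{1-\theta^N}$ for $r=0$.
   Context: $\mathfrak{S}_N$ is the set of permutations $\pi=[\pi_1\pi_2\cdots\pi_N]$ of $\{1,\dots,N\}$ in one-line notation; $\pi^{-1}(N)$ is the position of the entry $N$. A left-to-right maximum of $\pi$ is an entry $\pi_j$ larger than every $\pi_i$ with $i<j$. For $r\ge 0$, the $r$-positional strategy rejects $\pi_1,\dots,\pi_r$ and then accepts the first subsequent left-to-right maximum (so for $r=0$ it accepts $\pi_1$); it wins if the accepted entry is $N$, and $\pi$ is then called $r$-winnable. *)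

theory Defs
  imports Complex_Main "HOL-Combinatorics.Permutations"
begin

text \<open>A permutation pi of {1..N} is modelled as a function p with p permutes {1..N};
  its one-line entry at position i is p i. The position of the entry N is inv p N.\<close>

definition perms :: "nat \<Rightarrow> (nat \<Rightarrow> nat) set" where
  "perms N = {p. p permutes {1..N}}"

definition lr_max :: "(nat \<Rightarrow> nat) \<Rightarrow> nat \<Rightarrow> bool" where
  "lr_max p j \<longleftrightarrow> (\<forall>i. 1 \<le> i \<and> i < j \<longrightarrow> p i < p j)"

text \<open>The r-positional strategy accepts the first left-to-right maximum at a position
  j with r < j \<le> N (for r = 0 this is position 1); it wins iff that entry is N.\<close>
definition r_winnable :: "nat \<Rightarrow> nat \<Rightarrow> (nat \<Rightarrow> nat) \<Rightarrow> bool" where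
  "r_winnable N r p \<longleftrightarrow>
     (\<exists>j. r < j \<and> j \<le> N \<and> lr_max p j \<and> (\<forall>k. r < k \<and> k < j \<longrightarrow> \<not> lr_max p k) \<and> p j = N)"

definition weight :: "real \<Rightarrow> nat \<Rightarrow> (nat \<Rightarrow> nat) \<Rightarrow> real" where
  "weight \<theta> N p = \<theta> ^ (inv p N - 1)"

definition f_prob :: "real \<Rightarrow> nat \<Rightarrow> (nat \<Rightarrow> nat) \<Rightarrow> real" where
  "f_prob \<theta> N p = weight \<theta> N p / (\<Sum>s\<in>perms N. weight \<theta> N s)"

definition win_prob :: "real \<Rightarrow> nat \<Rightarrow> nat \<Rightarrow> real" where
  "win_prob \<theta> N r = (\<Sum>p\<in>{p\<in>perms N. r_winnable N r p}. f_prob \<theta> N p)"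

end

theory Submission
  imports Defs
begin

text \<open>Condition on the position m of the entry N. Since the weight depends only on m, given m
  the permutation is uniform among those with N at position m. For r \<ge> 1 the strategy wins
  such a permutation iff r < m and the largest of the first m - 1 entries sits at one of the
  positions 1..r; by transposing positions, each of the m - 1 positions is equally likely to hold
  that largest entry, so the conditional winning probability is r/(m - 1). Averaging with the
  weights \<theta>^(m-1) gives the formula.\<close>

definition perms_at :: "nat \<Rightarrow> nat \<Rightarrow> (nat \<Rightarrow> nat) set" where
  "perms_at N m = {p \<in> perms N. p m = N}"

definition prefix_argmax :: "nat \<Rightarrow> nat \<Rightarrow> nat \<Rightarrow> (nat \<Rightarrow> nat) set" where
  "prefix_argmax N m j = {p \<in> perms_at N m. \<forall>i\<in>{1..<m}. p i \<le> p j}"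

lemma card_eq_by_compose_transpose:
  assumes "\<And>p. p \<in> X \<Longrightarrow> p \<circ> transpose a b \<in> Y"
    and "\<And>q. q \<in> Y \<Longrightarrow> q \<circ> transpose a b \<in> X"
  shows "card X = card Y"
proof -
  have "bij_betw (\<lambda>p. p \<circ> transpose a b) X Y"
    by (rule bij_betw_byWitness[where f'="\<lambda>p. p \<circ> transpose a b"])
       (use assms in \<open>auto simp: comp_assoc\<close>)
  then show ?thesis by (rule bij_betw_same_card)
qed

lemma finite_perms: "finite (perms N)"
  unfolding perms_def by (rule finite_permutations) simp

lemma finite_perms_at: "finite (perms_at N m)"
  unfolding perms_at_def using finite_perms by simp

lemma finite_prefix_argmax: "finite (prefix_argmax N m j)"
  unfolding prefix_argmax_def using finite_perms_at by simp

lemma perms_inj: "p \<in> perms N \<Longrightarrow> p i = p j \<Longrightarrow> i = j"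
  unfolding perms_def by (metis mem_Collect_eq permutes_inj injD)

lemma perms_in_range: "p \<in> perms N \<Longrightarrow> i \<in> {1..N} \<Longrightarrow> p i \<in> {1..N}"
  unfolding perms_def by (metis mem_Collect_eq permutes_in_image)

lemma perms_compose_transpose:
  "p \<in> perms N \<Longrightarrow> a \<in> {1..N} \<Longrightarrow> b \<in> {1..N} \<Longrightarrow> p \<circ> transpose a b \<in> perms N"
  unfolding perms_def by (simp add: permutes_compose permutes_swap_id)

lemma perms_at_less:
  assumes "p \<in> perms_at N m" "i \<in> {1..N}" "i \<noteq> m"
  shows "p i < N"
proof -
  have p: "p \<in> perms N" "p m = N" using assms unfolding perms_at_def by auto
  have "p i \<in> {1..N}" using perms_in_range p assms by blast
  moreover have "p i \<noteq> N" using perms_inj[OF p(1), of i m] p assms by auto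
  ultimately show ?thesis by auto
qed

lemma perms_eq_Union_perms_at:
  assumes "1 \<le> N"
  shows "perms N = (\<Union>m\<in>{1..N}. perms_at N m)"
proof
  show "perms N \<subseteq> (\<Union>m\<in>{1..N}. perms_at N m)"
  proof
    fix p assume p: "p \<in> perms N"
    then have "p ` {1..N} = {1..N}" unfolding perms_def by (simp add: permutes_image)
    then obtain m where "m \<in> {1..N}" "p m = N" using assms
      by (metis atLeastAtMost_iff imageE order_refl)
    then show "p \<in> (\<Union>m\<in>{1..N}. perms_at N m)" using p unfolding perms_at_def by auto
  qed
qed (auto simp: perms_at_def)

lemma card_perms_at_eq:
  assumes "m \<in> {1..N}" "m' \<in> {1..N}"
  shows "card (perms_at N m) = card (perms_at N m')"
  by (rule card_eq_by_compose_transpose[where a=m and b=m'])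
     (use assms in \<open>auto simp: perms_at_def perms_compose_transpose\<close>)

lemma card_perms_at_pos:
  assumes "m \<in> {1..N}"
  shows "card (perms_at N m) > 0"
proof -
  have "transpose m N \<in> perms_at N m"
    using assms unfolding perms_at_def perms_def by (auto intro: permutes_swap_id)
  then show ?thesis using finite_perms_at card_gt_0_iff by blast
qed

lemma weight_perms_at:
  assumes "p \<in> perms_at N m"
  shows "weight \<theta> N p = \<theta> ^ (m - 1)"
proof -
  have "p permutes {1..N}" "p m = N" using assms unfolding perms_at_def perms_def by auto
  then have "inv p N = m" using permutes_inverses(2)[of p "{1..N}" m] by simp
  then show ?thesis unfolding weight_def by simp
qed

lemma sum_weight_perms_filter:
  assumes "1 \<le> N"
  shows "(\<Sum>p\<in>{p\<in>perms N. P p}. weight \<theta> N p)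
    = (\<Sum>m=1..N. \<theta> ^ (m - 1) * real (card {p\<in>perms_at N m. P p}))"
proof -
  have "{p\<in>perms N. P p} = (\<Union>m\<in>{1..N}. {p\<in>perms_at N m. P p})"
    using perms_eq_Union_perms_at[OF assms] by blast
  then have "(\<Sum>p\<in>{p\<in>perms N. P p}. weight \<theta> N p)
      = (\<Sum>m=1..N. \<Sum>p\<in>{p\<in>perms_at N m. P p}. weight \<theta> N p)"
    by (simp only:, intro sum.UNION_disjoint)
       (auto simp: finite_perms perms_at_def dest: perms_inj)
  also have "\<dots> = (\<Sum>m=1..N. \<Sum>p\<in>{p\<in>perms_at N m. P p}. \<theta> ^ (m - 1))"
    by (intro sum.cong) (auto simp: weight_perms_at)
  finally show ?thesis by (simp add: mult.commute)
qed

lemma win_prob_eq_conditional_average: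
  assumes "1 \<le> N"
  shows "win_prob \<theta> N r = (\<Sum>m=1..N. \<theta> ^ (m - 1) *
      (real (card {p\<in>perms_at N m. r_winnable N r p}) / real (card (perms_at N m))))
    / (\<Sum>m=1..N. \<theta> ^ (m - 1))"
proof -
  define K where "K = real (card (perms_at N 1))"
  have K: "real (card (perms_at N m)) = K" if "m \<in> {1..N}" for m
    unfolding K_def using card_perms_at_eq[OF that, of 1] assms by auto
  have "K \<noteq> 0" using K card_perms_at_pos[of 1 N] assms by fastforce
  have "win_prob \<theta> N r = (\<Sum>p\<in>{p\<in>perms N. r_winnable N r p}. weight \<theta> N p)
      / (\<Sum>p\<in>{p\<in>perms N. True}. weight \<theta> N p)"
    unfolding win_prob_def f_prob_def by (simp add: sum_divide_distrib)
  also have "\<dots> = (K * (\<Sum>m=1..N. \<theta> ^ (m - 1) *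
      (real (card {p\<in>perms_at N m. r_winnable N r p}) / real (card (perms_at N m)))))
    / (K * (\<Sum>m=1..N. \<theta> ^ (m - 1)))"
    unfolding sum_weight_perms_filter[OF assms] sum_distrib_left
    using \<open>K \<noteq> 0\<close> by (intro arg_cong2[where f="(/)"] sum.cong) (auto simp: K)
  finally show ?thesis using \<open>K \<noteq> 0\<close> by simp
qed

lemma perms_at_eq_Union_prefix_argmax:
  assumes "2 \<le> m"
  shows "perms_at N m = (\<Union>j\<in>{1..<m}. prefix_argmax N m j)"
proof
  show "perms_at N m \<subseteq> (\<Union>j\<in>{1..<m}. prefix_argmax N m j)"
  proof
    fix p assume p: "p \<in> perms_at N m"
    have "Max (p ` {1..<m}) \<in> p ` {1..<m}" using assms by (intro Max_in) auto
    then obtain j where j: "j \<in> {1..<m}" "p j = Max (p ` {1..<m})" by auto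
    then have "\<forall>i\<in>{1..<m}. p i \<le> p j" by auto
    with p j show "p \<in> (\<Union>j\<in>{1..<m}. prefix_argmax N m j)"
      unfolding prefix_argmax_def by blast
  qed
qed (auto simp: prefix_argmax_def)

lemma prefix_argmax_disjoint:
  assumes "j \<in> {1..<m}" "j' \<in> {1..<m}" "j \<noteq> j'"
  shows "prefix_argmax N m j \<inter> prefix_argmax N m j' = {}"
proof -
  have "p j = p j'" if "p \<in> prefix_argmax N m j" "p \<in> prefix_argmax N m j'" for p
    using that assms unfolding prefix_argmax_def by (auto intro: antisym)
  then show ?thesis
    using assms perms_inj[of _ N j j'] unfolding prefix_argmax_def perms_at_def by blast
qed

lemma card_prefix_argmax_eq:
  assumes "j \<in> {1..<m}" "j' \<in> {1..<m}" "m \<le> N"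
  shows "card (prefix_argmax N m j) = card (prefix_argmax N m j')"
proof -
  have t: "transpose j j' i \<in> {1..<m}" if "i \<in> {1..<m}" for i
    using that assms by (auto simp: transpose_def)
  have tm: "transpose j j' m = m" using assms by (auto simp: transpose_def)
  have jN: "j \<in> {1..N}" "j' \<in> {1..N}" using assms by auto
  show ?thesis
  proof (rule card_eq_by_compose_transpose[where a=j and b=j'])
    fix p assume "p \<in> prefix_argmax N m j"
    then show "p \<circ> transpose j j' \<in> prefix_argmax N m j'"
      using t tm jN unfolding prefix_argmax_def perms_at_def
      by (auto simp: perms_compose_transpose)
  next
    fix p assume "p \<in> prefix_argmax N m j'"
    then show "p \<circ> transpose j j' \<in> prefix_argmax N m j"
      using t tm jN unfolding prefix_argmax_def perms_at_def
      by (auto simp: perms_compose_transpose)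
  qed
qed

lemma card_Union_prefix_argmax:
  assumes "S \<subseteq> {1..<m}" "m \<le> N"
  shows "card (\<Union>j\<in>S. prefix_argmax N m j) = card S * card (prefix_argmax N m 1)"
proof -
  have "finite S" using assms(1) finite_subset by blast
  then have "card (\<Union>j\<in>S. prefix_argmax N m j) = (\<Sum>j\<in>S. card (prefix_argmax N m j))"
  proof (rule card_UN_disjoint)
    show "\<forall>i\<in>S. \<forall>j\<in>S. i \<noteq> j \<longrightarrow> prefix_argmax N m i \<inter> prefix_argmax N m j = {}"
      using assms(1) prefix_argmax_disjoint by blast
  qed (simp_all add: finite_prefix_argmax)
  also have "\<dots> = (\<Sum>j\<in>S. card (prefix_argmax N m 1))"
    using assms by (intro sum.cong card_prefix_argmax_eq) auto
  finally show ?thesis by simp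
qed

lemma r_winnable_perms_at_imp:
  assumes "p \<in> perms_at N m" "r_winnable N r p"
  shows "r < m" "\<forall>k. r < k \<and> k < m \<longrightarrow> \<not> lr_max p k"
proof -
  have p: "p \<in> perms N" "p m = N" using assms unfolding perms_at_def by auto
  obtain j where j: "r < j" "\<forall>k. r < k \<and> k < j \<longrightarrow> \<not> lr_max p k" "p j = N"
    using assms(2) unfolding r_winnable_def by blast
  have "j = m" using perms_inj[OF p(1), of j m] j p by auto
  then show "r < m" "\<forall>k. r < k \<and> k < m \<longrightarrow> \<not> lr_max p k" using j by auto
qed

lemma r_winnable_0_iff:
  assumes "1 \<le> N"
  shows "r_winnable N 0 p \<longleftrightarrow> p 1 = N"
proof
  have "lr_max p 1" unfolding lr_max_def by auto
  assume "r_winnable N 0 p"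
  then obtain j where "0 < j" "\<forall>k. 0 < k \<and> k < j \<longrightarrow> \<not> lr_max p k" "p j = N"
    unfolding r_winnable_def by blast
  with \<open>lr_max p 1\<close> show "p 1 = N" by (metis One_nat_def Suc_lessI zero_less_one)
next
  assume "p 1 = N"
  moreover have "lr_max p 1" unfolding lr_max_def by auto
  ultimately show "r_winnable N 0 p" unfolding r_winnable_def using assms by fastforce
qed

lemma r_winnable_iff_prefix_argmax:
  assumes "p \<in> perms_at N m" "m \<le> N" "1 \<le> r" "r < m"
  shows "r_winnable N r p \<longleftrightarrow> p \<in> (\<Union>j\<in>{1..r}. prefix_argmax N m j)"
proof
  assume win: "r_winnable N r p"
  obtain j where j: "j \<in> {1..<m}" "p \<in> prefix_argmax N m j"
    using perms_at_eq_Union_prefix_argmax[of m N] assms by auto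
  have "lr_max p j"
    unfolding lr_max_def
  proof (intro allI impI)
    fix i assume i: "1 \<le> i \<and> i < j"
    have "p i \<le> p j" using i j unfolding prefix_argmax_def by auto
    moreover have "p i \<noteq> p j"
      using perms_inj[of p N i j] assms(1) i unfolding perms_at_def by auto
    ultimately show "p i < p j" by simp
  qed
  then have "j \<le> r"
    using r_winnable_perms_at_imp(2)[OF assms(1) win] j by (meson atLeastLessThan_iff not_le)
  then show "p \<in> (\<Union>j\<in>{1..r}. prefix_argmax N m j)" using j by auto
next
  assume "p \<in> (\<Union>j\<in>{1..r}. prefix_argmax N m j)"
  then obtain j where j: "j \<in> {1..r}" "p \<in> prefix_argmax N m j" by auto
  have pm: "p m = N" using assms unfolding perms_at_def by auto
  have "lr_max p m"
    unfolding lr_max_def using perms_at_less[OF assms(1)] pm assms by auto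
  moreover have "\<not> lr_max p k" if "r < k" "k < m" for k
  proof -
    have "p k \<le> p j" using j that unfolding prefix_argmax_def by auto
    moreover have "1 \<le> j" "j < k" using j that by auto
    ultimately show ?thesis unfolding lr_max_def by (meson not_less)
  qed
  ultimately show "r_winnable N r p" unfolding r_winnable_def using assms pm by blast
qed

lemma conditional_win_prob_0:
  assumes "m \<in> {1..N}"
  shows "real (card {p\<in>perms_at N m. r_winnable N 0 p}) / real (card (perms_at N m))
    = (if m = 1 then 1 else 0)"
proof -
  have "r_winnable N 0 p \<longleftrightarrow> m = 1" if "p \<in> perms_at N m" for p
    using that assms perms_inj[of p N 1 m] r_winnable_0_iff[of N p]
    unfolding perms_at_def by auto
  then have winners: "{p\<in>perms_at N m. r_winnable N 0 p} = (if m = 1 then perms_at N m else {})"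
    by auto
  show ?thesis unfolding winners using card_perms_at_pos[OF assms] by (cases "m = 1") auto
qed

lemma conditional_win_prob:
  assumes "m \<in> {1..N}" "1 \<le> r"
  shows "real (card {p\<in>perms_at N m. r_winnable N r p}) / real (card (perms_at N m))
    = (if r < m then real r / real (m - 1) else 0)"
proof (cases "r < m")
  case True
  have "{p\<in>perms_at N m. r_winnable N r p} = (\<Union>j\<in>{1..r}. prefix_argmax N m j)"
    using r_winnable_iff_prefix_argmax[of _ N m r] True assms
    unfolding prefix_argmax_def by auto
  moreover have "{1..r} \<subseteq> {1..<m}" using True by auto
  ultimately have "card {p\<in>perms_at N m. r_winnable N r p} = r * card (prefix_argmax N m 1)"
    using card_Union_prefix_argmax[of "{1..r}" m N] assms by simp
  moreover have "card (perms_at N m) = (m - 1) * card (prefix_argmax N m 1)"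
    using perms_at_eq_Union_prefix_argmax[of m N] card_Union_prefix_argmax[of "{1..<m}" m N]
      True assms by auto
  moreover have "card (perms_at N m) > 0" using card_perms_at_pos[OF assms(1)] .
  ultimately show ?thesis using True by (simp add: of_nat_diff)
next
  case False
  then have winners: "{p\<in>perms_at N m. r_winnable N r p} = {}"
    using r_winnable_perms_at_imp(1) by blast
  show ?thesis unfolding winners using False by simp
qed

lemma sum_power_pred_eq:
  fixes \<theta> :: real
  assumes "\<theta> \<noteq> 1"
  shows "(\<Sum>m=1..N. \<theta> ^ (m - 1)) = (1 - \<theta> ^ N) / (1 - \<theta>)"
  using sum_gp_strict[of \<theta> N] assms by (simp add: sum.atLeast1_atMost_eq)

lemma sum_weighted_tail:
  fixes \<theta> :: real
  assumes "1 \<le> r" "1 \<le> N"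
  shows "(\<Sum>m=1..N. \<theta> ^ (m - 1) * (if r < m then real r / real (m - 1) else 0))
    = real r * (\<Sum>i=r..N-1. \<theta> ^ i / real i)"
proof -
  have "(\<Sum>m=1..N. \<theta> ^ (m - 1) * (if r < m then real r / real (m - 1) else 0))
      = (\<Sum>m=Suc r..Suc (N - 1). real r * (\<theta> ^ (m - 1) / real (m - 1)))"
    using assms by (intro sum.mono_neutral_cong_right) auto
  also have "\<dots> = real r * (\<Sum>i=r..N-1. \<theta> ^ i / real i)"
    by (simp only: sum.shift_bounds_cl_Suc_ivl sum_distrib_left) simp
  finally show ?thesis .
qed

theorem theorem2p3:
  fixes \<theta> :: real and N r :: nat
  assumes "\<theta> > 0" and "\<theta> \<noteq> 1" and "N \<ge> 1" and "r \<le> N - 1"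
  shows "win_prob \<theta> N r =
    (if r = 0 then (1 - \<theta>) / (1 - \<theta> ^ N)
     else real r * (1 - \<theta>) * (\<Sum>i=r..N-1. \<theta> ^ i / real i) / (1 - \<theta> ^ N))"
proof (cases "r = 0")
  case True
  have "win_prob \<theta> N r = (\<Sum>m=1..N. \<theta> ^ (m - 1) * (if m = 1 then 1 else 0))
      / (\<Sum>m=1..N. \<theta> ^ (m - 1))"
    unfolding win_prob_eq_conditional_average[OF \<open>N \<ge> 1\<close>] True
    by (intro arg_cong2[where f="(/)"] sum.cong) (simp_all add: conditional_win_prob_0)
  also have "\<dots> = 1 / ((1 - \<theta> ^ N) / (1 - \<theta>))"
    unfolding sum_power_pred_eq[OF \<open>\<theta> \<noteq> 1\<close>]
    using \<open>N \<ge> 1\<close> by (simp add: sum.atLeast_Suc_atMost)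
  finally show ?thesis using True by simp
next
  case False
  have "win_prob \<theta> N r
      = (\<Sum>m=1..N. \<theta> ^ (m - 1) * (if r < m then real r / real (m - 1) else 0))
        / (\<Sum>m=1..N. \<theta> ^ (m - 1))"
    unfolding win_prob_eq_conditional_average[OF \<open>N \<ge> 1\<close>] using False
    by (intro arg_cong2[where f="(/)"] sum.cong) (simp_all add: conditional_win_prob)
  also have "\<dots> = real r * (\<Sum>i=r..N-1. \<theta> ^ i / real i) / ((1 - \<theta> ^ N) / (1 - \<theta>))"
    using False \<open>N \<ge> 1\<close>
    by (simp only: sum_weighted_tail sum_power_pred_eq[OF \<open>\<theta> \<noteq> 1\<close>])
  finally show ?thesis using False by simp
qed

end
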